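(* Let $f_0(z)=10\cosh(z)-12$. Then the holomorphic map $f_0\colon 2\mathbb{D}\to f_0(2\mathbb{D})$ is proper of degree $2$, and $D(-2,4)\subset f_0(\mathbb{D})\subset D(-2,7)$ and $D(-2,9)\subset f_0(2\mathbb{D})$.
   Context: $\mathbb{D}$ is the open unit disk, $2\mathbb{D}$ the open disk of radius $2$ centered at $0$, and $D(c,r)$ the open disk of center $c$ and radius $r$. *)

theory Defs
  imports "HOL-Complex_Analysis.Complex_Analysis"
begin

definition f0 :: "complex \<Rightarrow> complex" where
  "f0 z = 10 * cosh z - 12"

definition map_degree_on :: "(complex \<Rightarrow> complex) \<Rightarrow> complex set \<Rightarrow> nat \<Rightarrow> bool" where
  "map_degree_on f S d \<longleftrightarrow>
     (\<forall>w \<in> f ` S. finite {z \<in> S. f z = w} \<and>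
        (\<Sum>z \<in> {z \<in> S. f z = w}. zorder (\<lambda>\<xi>. f \<xi> - w) z) = int d)"

end

theory Submission
  imports Defs
begin

text \<open>
  For z = x + iy one has |f0 z + 2| = 10 |cosh z - 1| = 10 (cosh x - cos y), and the Maclaurin
  expansions of cosh and cos squeeze this between 10 (r^2/2 - r^4/24) and
  10 (r^2/2 + cosh r r^4/24) on the circle |z| = r. By the open mapping theorem the image of a
  disc under a holomorphic map contains every disc around an image point that stays away from
  the image of the boundary circle; with the image point f0 0 = -2 this gives the two
  inclusions into images.

  If cosh z = cosh w then z - w or z + w lies in 2 pi i Z; for |z|, |w| <= 2 both have modulus
  at most 4 < 2 pi, so the fibres of f0 on the closed disc of radius 2 are the pairs {a, -a}.
  Hence the boundary circle is mapped outside f0(2D), which makes f0 proper, and each fibre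
  consists of two simple points or of the double point 0, where sinh vanishes.
\<close>

lemma cosh_Maclaurin4:
  fixes x :: real
  obtains t where "\<bar>t\<bar> \<le> \<bar>x\<bar>" and "cosh x = 1 + x\<^sup>2 / 2 + cosh t * x ^ 4 / 24"
proof -
  define diff where "diff n = (if even n then cosh else sinh :: real \<Rightarrow> real)" for n :: nat
  have "\<exists>t. \<bar>t\<bar> \<le> \<bar>x\<bar> \<and>
      cosh x = (\<Sum>m<4. diff m 0 / fact m * x ^ m) + diff 4 t / fact 4 * x ^ 4"
    by (rule Maclaurin_all_le) (auto simp: diff_def intro!: derivative_eq_intros)
  then show thesis
    by (auto simp: diff_def lessThan_nat_numeral fact_numeral intro: that)
qed

lemma cos_Maclaurin4:
  fixes x :: real
  obtains t where "cos x = 1 - x\<^sup>2 / 2 + cos t * x ^ 4 / 24"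
proof -
  obtain t where
    "cos x = (\<Sum>m<4. cos_coeff m * x ^ m) + cos (t + 1/2 * real 4 * pi) / fact 4 * x ^ 4"
    using Maclaurin_cos_expansion by blast
  then show thesis
    by (auto simp: lessThan_nat_numeral cos_coeff_def fact_numeral intro: that)
qed

lemma cos_ge_1_minus_sq_half: "1 - x\<^sup>2 / 2 \<le> cos (x::real)"
proof -
  obtain t where
    "cos x = (\<Sum>m<2. cos_coeff m * x ^ m) + cos (t + 1/2 * real 2 * pi) / fact 2 * x ^ 2"
    using Maclaurin_cos_expansion by blast
  then have "cos x = 1 - cos t * x\<^sup>2 / 2"
    by (auto simp: lessThan_nat_numeral cos_coeff_def)
  then show ?thesis
    using mult_right_mono[OF cos_le_one zero_le_power2, of t x] by simp
qed

lemma cosh_1_le_2: "cosh (1::real) \<le> 2"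
proof -
  have "cosh (1::real) = (exp 1 + exp (-1)) / 2"
    by (simp add: cosh_def)
  then show ?thesis
    using add_mono[OF exp_le, of "exp (-1)" 1] by simp
qed

lemma norm_cosh_minus_1: "norm (cosh z - 1) = cosh (Re z) - cos (Im z)"
proof -
  let ?x = "Re z" and ?y = "Im z"
  have "Re (cosh z) = cosh ?x * cos ?y" "Im (cosh z) = sinh ?x * sin ?y"
    by (simp_all add: cosh_field_def sinh_field_def Re_exp Im_exp cosh_def sinh_def field_simps)
  then have "norm (cosh z - 1) ^ 2 = (cosh ?x * cos ?y - 1)\<^sup>2 + (sinh ?x * sin ?y)\<^sup>2"
    by (simp add: cmod_power2)
  also have "\<dots> = (cosh ?x - cos ?y)\<^sup>2"
    using sinh_square_eq[of ?x] sin_squared_eq[of ?y]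
    by (simp add: power_mult_distrib power2_diff) (simp add: algebra_simps power2_eq_square)
  finally show ?thesis
    using cosh_real_ge_1[of ?x] cos_le_one[of ?y] by (simp add: power2_eq_iff_nonneg)
qed

lemma norm_cosh_minus_1_ge: "norm (z::complex) ^ 2 / 2 - norm z ^ 4 / 24 \<le> norm (cosh z - 1)"
proof -
  let ?x = "Re z" and ?y = "Im z"
  obtain t where cos_y: "cos ?y = 1 - ?y\<^sup>2 / 2 + cos t * ?y ^ 4 / 24"
    using cos_Maclaurin4 by blast
  obtain s where "cosh ?x = 1 + ?x\<^sup>2 / 2 + cosh s * ?x ^ 4 / 24"
    using cosh_Maclaurin4 by blast
  then have cosh_x: "1 + ?x\<^sup>2 / 2 \<le> cosh ?x"
    using cosh_real_nonneg[of s] by simp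
  have "cos t * ?y ^ 4 \<le> ?y ^ 4"
    using mult_right_mono[OF cos_le_one, of "?y ^ 4" t] by simp
  moreover have "?y ^ 4 \<le> norm z ^ 4"
    using power_mono[OF abs_Im_le_cmod abs_ge_zero, of z 4] by simp
  moreover have "norm z ^ 2 = ?x\<^sup>2 + ?y\<^sup>2"
    by (rule cmod_power2)
  ultimately show ?thesis
    using cos_y cosh_x unfolding norm_cosh_minus_1 by linarith
qed

lemma norm_cosh_minus_1_le:
  "norm (cosh (z::complex) - 1) \<le> norm z ^ 2 / 2 + cosh (norm z) * norm z ^ 4 / 24"
proof -
  let ?x = "Re z" and ?y = "Im z"
  obtain s where s: "\<bar>s\<bar> \<le> \<bar>?x\<bar>"
    and cosh_x: "cosh ?x = 1 + ?x\<^sup>2 / 2 + cosh s * ?x ^ 4 / 24"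
    using cosh_Maclaurin4 by blast
  have "\<bar>s\<bar> \<le> norm z"
    using s abs_Re_le_cmod[of z] by linarith
  then have "cosh s \<le> cosh (norm z)"
    using cosh_real_nonneg_le_iff[of "\<bar>s\<bar>" "norm z"] by simp
  moreover have "?x ^ 4 \<le> norm z ^ 4"
    using power_mono[OF abs_Re_le_cmod abs_ge_zero, of z 4] by simp
  ultimately have "cosh s * ?x ^ 4 \<le> cosh (norm z) * norm z ^ 4"
    by (intro mult_mono) simp_all
  moreover have "norm z ^ 2 = ?x\<^sup>2 + ?y\<^sup>2"
    by (rule cmod_power2)
  ultimately show ?thesis
    using cosh_x cos_ge_1_minus_sq_half[of ?y] unfolding norm_cosh_minus_1 by linarith
qed

lemma cosh_eq_cosh_imp_eq_or_minus:
  fixes z w :: complex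
  assumes "cosh z = cosh w" "norm (z - w) < 2 * pi" "norm (z + w) < 2 * pi"
  shows "z = w \<or> z = - w"
proof -
  obtain n where n: "n \<in> \<int>"
    and "\<i> * (z - w) = of_real (2 * n * pi) \<or> \<i> * (z + w) = of_real (2 * n * pi)"
    using assms(1) unfolding cosh_conv_cos complex_cos_eq by (auto simp: algebra_simps)
  then have "norm (z - w) = 2 * \<bar>n\<bar> * pi \<or> norm (z + w) = 2 * \<bar>n\<bar> * pi"
    by (metis norm_mult norm_ii mult_1 norm_of_real abs_mult abs_of_pos pi_gt_zero abs_numeral)
  then have "\<bar>n\<bar> < 1"
    using assms(2,3) by auto
  then have "n = 0"
    using n Ints_nonzero_abs_less1 by blast
  then show ?thesis
    using \<open>\<i> * (z - w) = _ \<or> _\<close> by (auto simp: add_eq_0_iff)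
qed

lemma sinh_complex_neq_0:
  fixes z :: complex
  assumes "z \<noteq> 0" "norm z < pi"
  shows "sinh z \<noteq> 0"
proof
  assume "sinh z = 0"
  then obtain n :: int where n: "\<i> * z = of_real (n * pi)"
    by (auto simp: sinh_conv_sin sin_eq_0)
  then have "norm z = \<bar>n\<bar> * pi"
    by (metis norm_mult norm_ii mult_1 norm_of_real abs_mult abs_of_pos pi_gt_zero of_int_abs)
  then have "n = 0"
    using assms(2) by auto
  then show False
    using n assms(1) by simp
qed

lemma ball_subset_image_if_sphere_far:
  fixes f :: "'a::heine_borel \<Rightarrow> 'b::real_normed_vector"
  assumes contf: "continuous_on (cball a r) f" and "open (f ` ball a r)"
    and c: "c \<in> f ` ball a r" and far: "\<And>\<zeta>. \<zeta> \<in> sphere a r \<Longrightarrow> \<rho> \<le> dist c (f \<zeta>)"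
  shows "ball c \<rho> \<subseteq> f ` ball a r"
proof (rule ccontr)
  let ?V = "f ` ball a r"
  assume "\<not> ball c \<rho> \<subseteq> ?V"
  then have "ball c \<rho> - ?V \<noteq> {}"
    by blast
  then have "c \<in> ball c \<rho>"
    by (cases "\<rho> \<le> 0") (auto simp: ball_empty)
  then have "ball c \<rho> \<inter> ?V \<noteq> {}"
    using c by blast
  then obtain q where q: "q \<in> ball c \<rho>" "q \<in> frontier ?V"
    using connected_Int_frontier[OF connected_ball] \<open>ball c \<rho> - ?V \<noteq> {}\<close> by blast
  have "closed (f ` cball a r)"
    by (intro compact_imp_closed compact_continuous_image contf compact_cball)
  then have "closure ?V \<subseteq> f ` cball a r"
    by (rule closure_minimal[rotated]) auto
  then have "q \<in> f ` cball a r - ?V"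
    using q \<open>open ?V\<close> by (auto simp: frontier_def interior_open)
  then obtain \<zeta> where "\<zeta> \<in> cball a r - ball a r" "q = f \<zeta>"
    by blast
  then show False
    using far q by (fastforce simp: cball_diff_eq_sphere)
qed

lemma ball_subset_holomorphic_image:
  assumes holf: "f holomorphic_on ball a r" and contf: "continuous_on (cball a r) f"
    and c: "c \<in> f ` ball a r" and far: "\<And>\<zeta>. \<zeta> \<in> sphere a r \<Longrightarrow> \<rho> \<le> dist c (f \<zeta>)"
  shows "ball c \<rho> \<subseteq> f ` ball a r"
proof (cases "f constant_on ball a r")
  case True
  have "0 < r"
    using c by (force intro: le_less_trans[OF zero_le_dist])
  have "f ` ball a r \<subseteq> {c}"
    using True c by (auto simp: constant_on_def)
  then have "f ` cball a r \<subseteq> {c}"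
    using image_closure_subset[of "ball a r" f "{c}"] contf \<open>0 < r\<close> by simp
  moreover have "a + of_real r \<in> sphere a r"
    using \<open>0 < r\<close> by (simp add: dist_norm)
  ultimately have "\<rho> \<le> dist c c"
    using far[of "a + of_real r"] sphere_cball by blast
  then show ?thesis
    by (simp add: ball_empty)
next
  case False
  then have "open (f ` ball a r)"
    by (intro open_mapping_thm[OF holf]) auto
  then show ?thesis
    using ball_subset_image_if_sphere_far contf c far by blast
qed

lemma proper_map_ball_if_sphere_image_disjoint:
  fixes f :: "'a::heine_borel \<Rightarrow> 'b::metric_space"
  assumes contf: "continuous_on (cball a r) f" and disj: "f ` sphere a r \<inter> f ` ball a r = {}"
  shows "proper_map (top_of_set (ball a r)) (top_of_set (f ` ball a r)) f"
proof (rule compact_imp_proper_map)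
  show "k_space (top_of_set (f ` ball a r))"
    by (intro metrizable_imp_k_space metrizable_space_subtopology metrizable_space_euclidean)
  show "kc_space (top_of_set (f ` ball a r))"
    by (intro Hausdorff_imp_kc_space Hausdorff_space_subtopology Hausdorff_space_euclidean)
  show "continuous_map (top_of_set (ball a r)) (top_of_set (f ` ball a r)) f
      \<or> kc_space (top_of_set (ball a r))"
    by (intro disjI2 Hausdorff_imp_kc_space Hausdorff_space_subtopology Hausdorff_space_euclidean)
  show "f \<in> topspace (top_of_set (ball a r)) \<rightarrow> topspace (top_of_set (f ` ball a r))"
    by auto
  fix K
  assume "compactin (top_of_set (f ` ball a r)) K"
  then have K: "compact K" "K \<subseteq> f ` ball a r"
    by (auto simp: compactin_subtopology)
  have "cball a r \<inter> f -` K \<subseteq> ball a r"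
    using K(2) disj by (auto simp flip: cball_diff_eq_sphere)
  then have "{x \<in> topspace (top_of_set (ball a r)). f x \<in> K} = cball a r \<inter> f -` K"
    by auto
  moreover have "closed (cball a r \<inter> f -` K)"
    by (intro continuous_closed_preimage contf compact_imp_closed K(1) closed_cball)
  then have "compact (cball a r \<inter> f -` K)"
    by (metis compact_Int_closed compact_cball Int_assoc Int_absorb)
  ultimately show
    "compactin (top_of_set (ball a r)) {x \<in> topspace (top_of_set (ball a r)). f x \<in> K}"
    using \<open>cball a r \<inter> f -` K \<subseteq> ball a r\<close> by (simp add: compactin_subtopology)
qed

lemma f0_holomorphic_on: "f0 holomorphic_on A"
  unfolding f0_def by (intro analytic_imp_holomorphic analytic_intros)

lemma continuous_on_f0: "continuous_on A f0"
  using f0_holomorphic_on holomorphic_on_imp_continuous_on by blast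

lemma dist_minus_2_f0: "dist (-2) (f0 z) = 10 * norm (cosh z - 1)"
proof -
  have "dist (-2) (f0 z) = norm (f0 z + 2)"
    by (simp add: dist_norm norm_minus_commute)
  also have "f0 z + 2 = 10 * (cosh z - 1)"
    by (simp add: f0_def algebra_simps)
  finally show ?thesis
    by (simp only: norm_mult) simp
qed

lemma f0_minus: "f0 (- z) = f0 z"
  by (simp add: f0_def)

lemma f0_eq_f0_imp_eq_or_minus:
  assumes "f0 z = f0 w" "norm z \<le> 2" "norm w \<le> 2"
  shows "z = w \<or> z = - w"
proof (rule cosh_eq_cosh_imp_eq_or_minus)
  show "cosh z = cosh w"
    using assms(1) by (simp add: f0_def)
  have "4 < 2 * pi"
    using pi_gt3 by simp
  then show "norm (z - w) < 2 * pi" "norm (z + w) < 2 * pi"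
    using assms(2,3) norm_triangle_ineq[of z w] norm_triangle_ineq4[of z w] by linarith+
qed

lemma zorder_f0:
  "zorder (\<lambda>\<xi>. f0 \<xi> - f0 a) a = (if sinh a = 0 then 2 else 1)"
proof -
  have "deriv (\<lambda>\<xi>. f0 \<xi> - f0 a) = (\<lambda>\<xi>. 10 * sinh \<xi>)"
    unfolding f0_def by (intro ext DERIV_imp_deriv) (auto intro!: derivative_eq_intros)
  moreover have "deriv (\<lambda>\<xi>. 10 * sinh \<xi>) = (\<lambda>\<xi>::complex. 10 * cosh \<xi>)"
    by (intro ext DERIV_imp_deriv) (auto intro!: derivative_eq_intros)
  ultimately have derivs: "(deriv ^^ 1) (\<lambda>\<xi>. f0 \<xi> - f0 a) a = 10 * sinh a"
      "(deriv ^^ 2) (\<lambda>\<xi>. f0 \<xi> - f0 a) a = 10 * cosh a"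
    by (simp_all add: numeral_2_eq_2)
  have analytic: "(\<lambda>\<xi>. f0 \<xi> - f0 a) analytic_on {a}"
    unfolding f0_def by (intro analytic_intros)
  show ?thesis
  proof (cases "sinh a = 0")
    case True
    then have "cosh a \<noteq> 0"
      using cosh_square_eq[of a] by auto
    have "zorder (\<lambda>\<xi>. f0 \<xi> - f0 a) a = int 2"
      by (rule zorder_zero_eqI'[OF analytic])
        (use True \<open>cosh a \<noteq> 0\<close> derivs in \<open>auto simp: less_2_cases_iff\<close>)
    then show ?thesis
      using True by simp
  next
    case False
    have "zorder (\<lambda>\<xi>. f0 \<xi> - f0 a) a = int 1"
      by (rule zorder_zero_eqI'[OF analytic]) (use False derivs in auto)
    then show ?thesis
      using False by simp
  qed
qed

lemma map_degree_on_f0: "map_degree_on f0 (ball 0 2) 2"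
  unfolding map_degree_on_def
proof
  fix w
  assume "w \<in> f0 ` ball 0 2"
  then obtain a where a: "a \<in> ball 0 2" "w = f0 a"
    by auto
  have "z = a \<or> z = - a" if "z \<in> ball 0 2" "f0 z = f0 a" for z
    using that a(1) f0_eq_f0_imp_eq_or_minus[of z a] by auto
  then have fibre: "{z \<in> ball 0 2. f0 z = w} = {a, - a}"
    using a by (auto simp: f0_minus)
  have "zorder (\<lambda>\<xi>. f0 \<xi> - w) z = (if z = 0 then 2 else 1)" if "z \<in> {a, - a}" for z
  proof -
    have "w = f0 z"
      using that a by (auto simp: f0_minus)
    moreover have "norm z < pi"
      using that a pi_gt3 by auto
    then have "sinh z = 0 \<longleftrightarrow> z = 0"
      using sinh_complex_neq_0[of z] by auto
    ultimately show ?thesis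
      using zorder_f0[of z] by simp
  qed
  then have "(\<Sum>z \<in> {a, - a}. zorder (\<lambda>\<xi>. f0 \<xi> - w) z) = 2"
    by (cases "a = 0") auto
  then show "finite {z \<in> ball 0 2. f0 z = w} \<and>
      (\<Sum>z \<in> {z \<in> ball 0 2. f0 z = w}. zorder (\<lambda>\<xi>. f0 \<xi> - w) z) = int 2"
    unfolding fibre by simp
qed

lemma proper_map_f0:
  "proper_map (top_of_set (ball 0 2)) (top_of_set (f0 ` ball 0 2)) f0"
proof (rule proper_map_ball_if_sphere_image_disjoint[OF continuous_on_f0])
  show "f0 ` sphere 0 2 \<inter> f0 ` ball 0 2 = {}"
    using f0_eq_f0_imp_eq_or_minus by fastforce
qed

lemma ball_subset_f0_image:
  assumes "\<rho> \<le> 10 * (R\<^sup>2 / 2 - R ^ 4 / 24)" "0 < R"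
  shows "ball (-2) \<rho> \<subseteq> f0 ` ball 0 R"
proof (rule ball_subset_holomorphic_image[OF f0_holomorphic_on continuous_on_f0])
  show "-2 \<in> f0 ` ball 0 R"
    using assms(2) by (intro image_eqI[of _ _ 0]) (simp_all add: f0_def)
  show "\<rho> \<le> dist (-2) (f0 \<zeta>)" if "\<zeta> \<in> sphere 0 R" for \<zeta>
    using that assms(1) norm_cosh_minus_1_ge[of \<zeta>] by (simp add: dist_minus_2_f0)
qed

lemma f0_image_ball_1_subset: "f0 ` ball 0 1 \<subseteq> ball (-2) 7"
proof
  fix w
  assume "w \<in> f0 ` ball 0 1"
  then obtain z where z: "norm z < 1" "w = f0 z"
    by auto
  have "cosh (norm z) \<le> 2"
    using z cosh_real_nonneg_le_iff[of "norm z" 1] cosh_1_le_2 by simp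
  moreover have "norm z ^ 4 \<le> 1"
    using z by (simp add: power_le_one)
  ultimately have "cosh (norm z) * norm z ^ 4 \<le> 2"
    using mult_mono[of "cosh (norm z)" 2 "norm z ^ 4" 1] by simp
  moreover have "norm z ^ 2 < 1"
    using z by (simp add: power_less_one_iff)
  ultimately have "norm (cosh z - 1) < 7 / 10"
    using norm_cosh_minus_1_le[of z] by linarith
  then show "w \<in> ball (-2) 7"
    using z by (simp add: dist_minus_2_f0)
qed

theorem lemma4p2:
  shows "f0 holomorphic_on ball 0 2
    \<and> proper_map (top_of_set (ball 0 2)) (top_of_set (f0 ` ball 0 2)) f0
    \<and> map_degree_on f0 (ball 0 2) 2
    \<and> ball (-2) 4 \<subseteq> f0 ` ball 0 1 \<and> f0 ` ball 0 1 \<subseteq> ball (-2) 7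
    \<and> ball (-2) 9 \<subseteq> f0 ` ball 0 2"
proof (intro conjI)
  show "ball (-2) 4 \<subseteq> f0 ` ball 0 1"
    by (rule ball_subset_f0_image) simp_all
  show "ball (-2) 9 \<subseteq> f0 ` ball 0 2"
    by (rule ball_subset_f0_image) simp_all
qed (fact f0_holomorphic_on proper_map_f0 map_degree_on_f0 f0_image_ball_1_subset)+

end
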